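(* Let $P<N$ and let $\phi_1,\dots,\phi_N\in\mathbb R^{P\times N}$ be random matrices whose entries are i.i.d. Gaussian with mean $0$ and variance $1/P$. Then with probability one every $\phi_q$ is full-spark. Consequently, for any network dynamical system $\mathcal G=(G,f,h)$ of size $N$ satisfying Assumptions 1 and 2 with $P>2\Delta(G)+1$, almost surely the following holds: for every $q\in[N]$, with $y^q(1)=\phi_q x^q(1)$ where $x^q(1)$ is the time-1 state from a $q$-pinching initial condition, the problem $\min\|\tilde x\|_0$ subject to $\phi_q\tilde x=y^q(1)$ has the unique solution $x^q(1)$, and $\operatorname{supp}(x^q(1))\setminus\{q\}=L_1(q)$.
   Context: Let $G$ be a directed graph on vertex set $[N]=\{1,\dots,N\}$ without self-loops, with adjacency matrix $A\in\{0,1\}^{N\times N}$, where $A_{ij}=1$ if and only if $i$ receives an edge (input) from $j$; in particular $A_{ii}=0$. The out-degree of $q\in[N]$ is $d_q=\#\{i: A_{iq}=1\}$, the maximum out-degree is $\Delta(G)=\max_{q}d_q$, and the first-level set of $q$ is $L_1(q)=\{i\in[N]: A_{iq}=1\}$. The network dynamical system $\mathcal G=(G,f,h)$ is the discrete-time system $x_i(t+1)=f_i(x_i(t))+\sum_{j=1}^N A_{ij}h_{ij}(x_i(t),x_j(t))$ for $i\in[N]$, $t=0,1,2,\dots$, where $f_i:\mathbb R\to\mathbb R$ and $h_{ij}:\mathbb R\times\mathbb R\to\mathbb R$; the state vector is $x(t)=(x_1(t),\dots,x_N(t))^T$. Assumption 1: $f_i(0)=0$ for all $i\in[N]$. Assumption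 2: there is $\delta>0$ such that for all $i,j\in[N]$, $h_{ij}(0,0)=0$ and $h_{ij}(0,v)\neq 0$ for every $v$ with $0<|v|<\delta$. For $q\in[N]$, a $q$-pinching initial condition is $x^q(0)$ with $x^q_i(0)=\epsilon_q\delta_{iq}$ (Kronecker delta), where $0<|\epsilon_q|<\delta$; $x^q(t)$ denotes the resulting trajectory. For $x\in\mathbb R^N$, $\operatorname{supp}(x)=\{i: x_i\neq0\}$ and $\|x\|_0=\#\operatorname{supp}(x)$. The spark of $\phi\in\mathbb R^{P\times N}$ ($P<N$) is $\min\{\|x\|_0: \phi x=0,\ x\neq 0\}$; $\phi$ is full-spark if its spark equals $P+1$. *)

theory Defs
  imports "HOL-Probability.Probability"
begin

(* Vertices / columns are indexed by {..<N} (0-based version of [N]); rows by {..<P}.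
   A P x N matrix is a function nat => nat => real (row, column). *)

definition is_vec :: "nat \<Rightarrow> (nat \<Rightarrow> real) \<Rightarrow> bool" where
  "is_vec N x \<longleftrightarrow> (\<forall>j. N \<le> j \<longrightarrow> x j = 0)"

definition mat_vec :: "nat \<Rightarrow> nat \<Rightarrow> (nat \<Rightarrow> nat \<Rightarrow> real) \<Rightarrow> (nat \<Rightarrow> real) \<Rightarrow> (nat \<Rightarrow> real)" where
  "mat_vec P N phi x = (\<lambda>i. if i < P then (\<Sum>j<N. phi i j * x j) else 0)"

definition supp :: "nat \<Rightarrow> (nat \<Rightarrow> real) \<Rightarrow> nat set" where
  "supp N x = {j. j < N \<and> x j \<noteq> 0}"

definition l0norm :: "nat \<Rightarrow> (nat \<Rightarrow> real) \<Rightarrow> nat" where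
  "l0norm N x = card (supp N x)"

definition spark :: "nat \<Rightarrow> nat \<Rightarrow> (nat \<Rightarrow> nat \<Rightarrow> real) \<Rightarrow> nat" where
  "spark P N phi = Inf {l0norm N x | x. is_vec N x \<and> x \<noteq> (\<lambda>_. 0) \<and> mat_vec P N phi x = (\<lambda>_. 0)}"

definition full_spark :: "nat \<Rightarrow> nat \<Rightarrow> (nat \<Rightarrow> nat \<Rightarrow> real) \<Rightarrow> bool" where
  "full_spark P N phi \<longleftrightarrow> spark P N phi = P + 1"

definition l0_unique_solution :: "nat \<Rightarrow> nat \<Rightarrow> (nat \<Rightarrow> nat \<Rightarrow> real) \<Rightarrow> (nat \<Rightarrow> real) \<Rightarrow> (nat \<Rightarrow> real) \<Rightarrow> bool" where
  "l0_unique_solution P N phi y x \<longleftrightarrow>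
     is_vec N x \<and> mat_vec P N phi x = y \<and>
     (\<forall>z. is_vec N z \<and> mat_vec P N phi z = y \<and> z \<noteq> x \<longrightarrow> l0norm N x < l0norm N z)"

(* Graph: adjacency matrix A with A i j = 1 iff i receives an edge from j *)
definition adjacency :: "nat \<Rightarrow> (nat \<Rightarrow> nat \<Rightarrow> real) \<Rightarrow> bool" where
  "adjacency N A \<longleftrightarrow> (\<forall>i<N. \<forall>j<N. A i j \<in> {0, 1}) \<and> (\<forall>i<N. A i i = 0)"

definition out_degree :: "nat \<Rightarrow> (nat \<Rightarrow> nat \<Rightarrow> real) \<Rightarrow> nat \<Rightarrow> nat" where
  "out_degree N A q = card {i. i < N \<and> A i q = 1}"

definition max_out_degree :: "nat \<Rightarrow> (nat \<Rightarrow> nat \<Rightarrow> real) \<Rightarrow> nat" where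
  "max_out_degree N A = Max ((\<lambda>q. out_degree N A q) ` {..<N})"

definition first_level :: "nat \<Rightarrow> (nat \<Rightarrow> nat \<Rightarrow> real) \<Rightarrow> nat \<Rightarrow> nat set" where
  "first_level N A q = {i. i < N \<and> A i q = 1}"

definition nds_step :: "nat \<Rightarrow> (nat \<Rightarrow> nat \<Rightarrow> real) \<Rightarrow> (nat \<Rightarrow> real \<Rightarrow> real)
      \<Rightarrow> (nat \<Rightarrow> nat \<Rightarrow> real \<Rightarrow> real \<Rightarrow> real) \<Rightarrow> (nat \<Rightarrow> real) \<Rightarrow> (nat \<Rightarrow> real)" where
  "nds_step N A f h x = (\<lambda>i. if i < N then f i (x i) + (\<Sum>j<N. A i j * h i j (x i) (x j)) else 0)"

definition nds_traj :: "nat \<Rightarrow> (nat \<Rightarrow> nat \<Rightarrow> real) \<Rightarrow> (nat \<Rightarrow> real \<Rightarrow> real)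
      \<Rightarrow> (nat \<Rightarrow> nat \<Rightarrow> real \<Rightarrow> real \<Rightarrow> real) \<Rightarrow> (nat \<Rightarrow> real) \<Rightarrow> nat \<Rightarrow> (nat \<Rightarrow> real)" where
  "nds_traj N A f h x0 t = (nds_step N A f h ^^ t) x0"

definition pinching_init :: "nat \<Rightarrow> real \<Rightarrow> (nat \<Rightarrow> real)" where
  "pinching_init q \<epsilon> = (\<lambda>i. if i = q then \<epsilon> else 0)"

definition assumption1 :: "nat \<Rightarrow> (nat \<Rightarrow> real \<Rightarrow> real) \<Rightarrow> bool" where
  "assumption1 N f \<longleftrightarrow> (\<forall>i<N. f i 0 = 0)"

definition assumption2 :: "nat \<Rightarrow> (nat \<Rightarrow> nat \<Rightarrow> real \<Rightarrow> real \<Rightarrow> real) \<Rightarrow> real \<Rightarrow> bool" where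
  "assumption2 N h \<delta> \<longleftrightarrow> \<delta> > 0 \<and>
     (\<forall>i<N. \<forall>j<N. h i j 0 0 = 0 \<and> (\<forall>v. 0 < \<bar>v\<bar> \<and> \<bar>v\<bar> < \<delta> \<longrightarrow> h i j 0 v \<noteq> 0))"

(* The N random P x N matrices phi_1..phi_N: entry (q,i,j) is (phi_q)_{ij},
   i.i.d. N(0, 1/P), i.e. standard deviation sqrt(1/P). *)
definition gauss_matrices :: "nat \<Rightarrow> nat \<Rightarrow> (nat \<times> nat \<times> nat \<Rightarrow> real) measure" where
  "gauss_matrices P N = PiM ({..<N} \<times> {..<P} \<times> {..<N})
      (\<lambda>_. density lborel (normal_density 0 (sqrt (1 / real P))))"

definition phi_of :: "(nat \<times> nat \<times> nat \<Rightarrow> real) \<Rightarrow> nat \<Rightarrow> (nat \<Rightarrow> nat \<Rightarrow> real)" where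
  "phi_of \<omega> q = (\<lambda>i j. \<omega> (q, i, j))"

end

theory Submission
  imports Defs "Jordan_Normal_Form.Determinant"
begin

text \<open>
  A square matrix whose entries are distinct coordinates of an i.i.d. sample from a diffuse
  distribution is almost surely nonsingular: expanding the determinant along the first column
  shows that it is an affine function of the top-left entry whose slope, the complementary minor,
  is almost surely nonzero by induction; so it vanishes only if the top-left entry hits one value
  determined by the other entries, which has probability zero by Fubini. Hence almost surely every
  \<open>P \<times> P\<close> column submatrix of every \<open>\<phi>\<^sub>q\<close> is nonsingular, i.e. \<open>\<phi>\<^sub>q\<close> is
  full-spark. A pinched initial condition produces at time 1 a state supported on \<open>q\<close> and its
  first-level set, which has at most \<open>\<Delta>(G) + 1 < (P + 1) / 2\<close> nonzero entries; two solutions of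
  \<open>\<phi>\<^sub>q z = y\<close> that sparse would differ by a kernel vector with fewer than \<open>P + 1\<close> nonzero
  entries.
\<close>

lemma measurable_component_borel:
  assumes "sets M = sets borel" "i \<in> I"
  shows "(\<lambda>w. w i) \<in> borel_measurable (PiM I (\<lambda>_. M))"
  using measurable_component_singleton[OF assms(2), of "\<lambda>_. M"]
  by (simp add: measurable_cong_sets[OF refl assms(1)])

lemma AE_PiM_component_neq:
  fixes M :: "real measure" and g :: "('i \<Rightarrow> real) \<Rightarrow> real"
  assumes "prob_space M" and fin: "finite I" and kI: "k \<in> I"
    and diffuse: "\<And>c. AE y in M. y \<noteq> c"
    and sets_M: "sets M = sets borel"
    and g: "g \<in> borel_measurable (PiM I (\<lambda>_. M))"
    and g_indep: "\<And>w t. g (w(k := t)) = g w"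
  shows "AE w in PiM I (\<lambda>_. M). w k \<noteq> g w"
proof -
  interpret product_sigma_finite "\<lambda>_::'i. M"
    using prob_space_imp_sigma_finite[OF \<open>prob_space M\<close>] by (simp add: product_sigma_finite_def)
  define J where "J = I - {k}"
  have I: "I = insert k J" and "k \<notin> J" "finite J"
    using kI fin by (auto simp: J_def)
  define S where "S = {w \<in> space (PiM I (\<lambda>_. M)). w k = g w}"
  have S: "S \<in> sets (PiM I (\<lambda>_. M))"
    unfolding S_def using measurable_component_borel[OF sets_M kI] g by measurable
  have "emeasure (PiM I (\<lambda>_. M)) S = (\<integral>\<^sup>+ w. indicator S w \<partial>PiM I (\<lambda>_. M))"
    using S by simp
  also have "\<dots> = (\<integral>\<^sup>+ x. \<integral>\<^sup>+ y. indicator S (x(k := y)) \<partial>M \<partial>PiM J (\<lambda>_. M))"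
    using product_nn_integral_insert[OF \<open>finite J\<close> \<open>k \<notin> J\<close>, of "indicator S"] S I by simp
  also have "\<dots> = (\<integral>\<^sup>+ x. 0 \<partial>PiM J (\<lambda>_. M))"
  proof (rule nn_integral_cong)
    fix x
    have "AE y in M. indicator S (x(k := y)) = (0::ennreal)"
      using diffuse[of "g (x(k := 0))"]
    proof eventually_elim
      case (elim y)
      have "g (x(k := y)) = g (x(k := 0))"
        by (metis fun_upd_upd g_indep)
      with elim show ?case
        by (auto simp: S_def indicator_def)
    qed
    then show "(\<integral>\<^sup>+ y. indicator S (x(k := y)) \<partial>M) = 0"
      by (simp add: nn_integral_cong_AE)
  qed
  finally have "emeasure (PiM I (\<lambda>_. M)) S = 0"
    by simp
  with S show ?thesis
    by (intro AE_I[where N = S]) (auto simp: S_def)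
qed

lemma borel_measurable_det_mat:
  fixes e :: "'a \<Rightarrow> nat \<Rightarrow> nat \<Rightarrow> real"
  assumes "\<And>i j. i < n \<Longrightarrow> j < n \<Longrightarrow> (\<lambda>w. e w i j) \<in> borel_measurable M"
  shows "(\<lambda>w. det (mat n n (\<lambda>(i, j). e w i j))) \<in> borel_measurable M"
proof -
  have "(\<lambda>w. det (mat n n (\<lambda>(i, j). e w i j))) =
      (\<lambda>w. \<Sum>p \<in> {p. p permutes {0..<n}}. signof p * (\<Prod>i = 0..<n. e w i (p i)))"
    by (rule ext, subst det_def'[of _ n]) auto
  also have "\<dots> \<in> borel_measurable M"
    using permutes_in_image by (fastforce intro!: borel_measurable_sum borel_measurable_times
        borel_measurable_prod assms)
  finally show ?thesis .
qed

lemma det_mat_Suc_split_corner: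
  fixes e :: "nat \<Rightarrow> nat \<Rightarrow> 'a :: comm_ring_1"
  shows "det (mat (Suc n) (Suc n) (\<lambda>(i, j). e i j)) =
    e 0 0 * det (mat n n (\<lambda>(i, j). e (Suc i) (Suc j)))
    + det (mat (Suc n) (Suc n) (\<lambda>(i, j). if i = 0 \<and> j = 0 then 0 else e i j))"
proof -
  define A where "A = mat (Suc n) (Suc n) (\<lambda>(i, j). e i j)"
  define B where "B = mat (Suc n) (Suc n) (\<lambda>(i, j). if i = 0 \<and> j = 0 then 0 else e i j)"
  have A: "A \<in> carrier_mat (Suc n) (Suc n)" and B: "B \<in> carrier_mat (Suc n) (Suc n)"
    by (auto simp: A_def B_def)
  have cofactor_eq: "cofactor A i 0 = cofactor B i 0" for i
    unfolding cofactor_def by (rule arg_cong, rule eq_matI) (auto simp: mat_delete_def A_def B_def)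
  have entries: "B $$ (0, 0) = 0" "\<And>i. i < n \<Longrightarrow> B $$ (Suc i, 0) = A $$ (Suc i, 0)"
    by (auto simp: A_def B_def)
  have corner_minor: "mat_delete A 0 0 = mat n n (\<lambda>(i, j). e (Suc i) (Suc j))"
    by (rule eq_matI) (auto simp: mat_delete_def A_def)
  have "det A = A $$ (0, 0) * cofactor A 0 0 + (\<Sum>i<n. A $$ (Suc i, 0) * cofactor A (Suc i) 0)"
    using laplace_expansion_column[OF A, of 0] by (simp only: sum.lessThan_Suc_shift)
  moreover have "det B = (\<Sum>i<n. A $$ (Suc i, 0) * cofactor A (Suc i) 0)"
    using laplace_expansion_column[OF B, of 0]
    by (simp only: sum.lessThan_Suc_shift) (simp add: cofactor_eq entries)
  ultimately show ?thesis
    using corner_minor by (simp add: A_def[symmetric] B_def[symmetric] cofactor_def) (simp add: A_def)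
qed

lemma det_mat_0: "det (mat 0 0 f) = 1"
proof -
  have "mat 0 0 f = 1\<^sub>m 0"
    by (rule eq_matI) auto
  then show ?thesis
    by simp
qed

lemma AE_PiM_det_nonzero:
  fixes M :: "real measure" and e :: "nat \<Rightarrow> nat \<Rightarrow> 'i"
  assumes M: "prob_space M" "\<And>c. AE y in M. y \<noteq> c" "sets M = sets borel"
    and "finite I"
    and "\<And>i j. i < n \<Longrightarrow> j < n \<Longrightarrow> e i j \<in> I"
    and "inj_on (\<lambda>(i, j). e i j) ({..<n} \<times> {..<n})"
  shows "AE w in PiM I (\<lambda>_. M). det (mat n n (\<lambda>(i, j). w (e i j))) \<noteq> 0"
  using assms(5,6)
proof (induction n arbitrary: e)
  case 0
  then show ?case
    by (simp add: det_mat_0)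
next
  case (Suc n)
  define k where "k = e 0 0"
  have k_other: "e i j \<noteq> k" if "i < Suc n" "j < Suc n" "i \<noteq> 0 \<or> j \<noteq> 0" for i j
    using inj_onD[OF Suc.prems(2), of "(i, j)" "(0, 0)"] that by (auto simp: k_def)
  define minor where "minor w = det (mat n n (\<lambda>(i, j). w (e (Suc i) (Suc j))))" for w :: "'i \<Rightarrow> real"
  define rest where "rest w = det (mat (Suc n) (Suc n)
      (\<lambda>(i, j). if i = 0 \<and> j = 0 then 0 else w (e i j)))" for w :: "'i \<Rightarrow> real"
  have det_affine: "det (mat (Suc n) (Suc n) (\<lambda>(i, j). w (e i j))) = w k * minor w + rest w" for w
    using det_mat_Suc_split_corner[of n "\<lambda>i j. w (e i j)"] by (simp add: k_def minor_def rest_def)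
  have "inj_on (\<lambda>(i, j). e (Suc i) (Suc j)) ({..<n} \<times> {..<n})"
    using Suc.prems(2) by (auto simp: inj_on_def)
  then have minor_nonzero: "AE w in PiM I (\<lambda>_. M). minor w \<noteq> 0"
    unfolding minor_def using Suc.IH[of "\<lambda>i j. e (Suc i) (Suc j)"] Suc.prems(1) by simp
  have minor_indep: "minor (w(k := t)) = minor w" for w t
    unfolding minor_def using k_other by (intro arg_cong[where f = det] eq_matI) auto
  have rest_indep: "rest (w(k := t)) = rest w" for w t
    unfolding rest_def using k_other by (intro arg_cong[where f = det] eq_matI) auto
  have component: "(\<lambda>w. w (e i j)) \<in> borel_measurable (PiM I (\<lambda>_. M))"
    if "i < Suc n" "j < Suc n" for i j
    using measurable_component_borel[OF M(3) Suc.prems(1)[OF that]] .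
  have "minor \<in> borel_measurable (PiM I (\<lambda>_. M))" "rest \<in> borel_measurable (PiM I (\<lambda>_. M))"
    unfolding minor_def rest_def using component by (auto intro!: borel_measurable_det_mat)
  then have "(\<lambda>w. - rest w / minor w) \<in> borel_measurable (PiM I (\<lambda>_. M))"
    by measurable
  from AE_PiM_component_neq[OF M(1) \<open>finite I\<close> _ M(2,3) this]
  have "AE w in PiM I (\<lambda>_. M). w k \<noteq> - rest w / minor w"
    using Suc.prems(1) minor_indep rest_indep by (simp add: k_def)
  with minor_nonzero show ?case
    by eventually_elim (auto simp: det_affine field_simps)
qed

lemma mat_vec_eq_submatrix_mult:
  fixes phi :: "nat \<Rightarrow> nat \<Rightarrow> real"
  assumes "distinct cs" "set cs \<subseteq> {..<N}" "supp N x \<subseteq> set cs" "i < P"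
  shows "mat_vec P N phi x i =
    (mat P (length cs) (\<lambda>(i, j). phi i (cs ! j)) *\<^sub>v vec (length cs) (\<lambda>j. x (cs ! j))) $ i"
proof -
  have "(mat P (length cs) (\<lambda>(i, j). phi i (cs ! j)) *\<^sub>v vec (length cs) (\<lambda>j. x (cs ! j))) $ i
      = (\<Sum>k = 0..<length cs. phi i (cs ! k) * x (cs ! k))"
    using assms(4) by (simp add: scalar_prod_def)
  also have "\<dots> = (\<Sum>j\<in>set cs. phi i j * x j)"
    using sum.reindex[OF inj_on_nth[OF assms(1)], of "{0..<length cs}" "\<lambda>j. phi i j * x j"]
      nth_image[of "length cs" cs] by simp
  also have "\<dots> = (\<Sum>j<N. phi i j * x j)"
    using assms(2,3) by (intro sum.mono_neutral_left) (auto simp: supp_def)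
  finally show ?thesis
    using assms(4) by (simp add: mat_vec_def)
qed

lemma l0norm_kernel_gt_if_minors_nonsingular:
  fixes phi :: "nat \<Rightarrow> nat \<Rightarrow> real"
  assumes minors: "\<And>cs. length cs = P \<Longrightarrow> distinct cs \<Longrightarrow> set cs \<subseteq> {..<N} \<Longrightarrow>
      det (mat P P (\<lambda>(i, j). phi i (cs ! j))) \<noteq> 0"
    and "P \<le> N"
    and x: "is_vec N x" "x \<noteq> (\<lambda>_. 0)" "mat_vec P N phi x = (\<lambda>_. 0)"
  shows "P < l0norm N x"
proof (rule ccontr)
  assume "\<not> P < l0norm N x"
  then obtain T where T: "supp N x \<subseteq> T" "T \<subseteq> {..<N}" "card T = P"
    using exists_subset_between[of "supp N x" P "{..<N}"] \<open>P \<le> N\<close>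
    by (auto simp: l0norm_def supp_def)
  define cs where "cs = sorted_list_of_set T"
  have cs: "distinct cs" "set cs = T" "length cs = P"
    using T finite_subset[OF T(2)] by (auto simp: cs_def)
  define v where "v = vec P (\<lambda>j. x (cs ! j))"
  have "mat P P (\<lambda>(i, j). phi i (cs ! j)) *\<^sub>v v = 0\<^sub>v P"
  proof (rule eq_vecI)
    fix i assume "i < dim_vec (0\<^sub>v P :: real vec)"
    then show "(mat P P (\<lambda>(i, j). phi i (cs ! j)) *\<^sub>v v) $ i = 0\<^sub>v P $ i"
      using mat_vec_eq_submatrix_mult[OF cs(1), of N x i P phi] cs T x(3)
      by (simp add: v_def)
  qed simp
  moreover have "v \<noteq> 0\<^sub>v P"
  proof -
    obtain j where j: "x j \<noteq> 0"
      using x(2) by auto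
    then have "j \<in> set cs"
      using x(1) T(1) cs(2) by (auto simp: is_vec_def supp_def not_le[symmetric])
    then obtain k where "k < P" "cs ! k = j"
      using cs(3) by (auto simp: in_set_conv_nth)
    with j show ?thesis
      by (auto simp: v_def dest!: arg_cong[where f = "\<lambda>v. v $ k"])
  qed
  moreover have "v \<in> carrier_vec P"
    by (simp add: v_def)
  ultimately have "det (mat P P (\<lambda>(i, j). phi i (cs ! j))) = 0"
    using det_0_iff_vec_prod_zero[OF mat_carrier] by blast
  with minors[OF cs(3,1)] cs(2) T(2) show False
    by simp
qed

lemma exists_kernel_vector_l0norm_le:
  fixes phi :: "nat \<Rightarrow> nat \<Rightarrow> real"
  assumes "P < N"
  shows "\<exists>x. is_vec N x \<and> x \<noteq> (\<lambda>_. 0) \<and> mat_vec P N phi x = (\<lambda>_. 0) \<and> l0norm N x \<le> P + 1"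
proof -
  \<comment> \<open>Pad the first \<open>P + 1\<close> columns with a zero row to get a singular square matrix.\<close>
  define B where "B = mat (Suc P) (Suc P) (\<lambda>(i, j). if i < P then phi i j else 0)"
  have "B = mat\<^sub>r (Suc P) (Suc P) (\<lambda>i. if i = P then 0\<^sub>v (Suc P) else vec (Suc P) (phi i))"
    by (rule eq_matI) (auto simp: B_def)
  then have "det B = 0"
    using det_row_0[of P "Suc P" "\<lambda>i. vec (Suc P) (phi i)"] by auto
  then obtain v where v: "v \<in> carrier_vec (Suc P)" "v \<noteq> 0\<^sub>v (Suc P)" "B *\<^sub>v v = 0\<^sub>v (Suc P)"
    using det_0_iff_vec_prod_zero[of B "Suc P"] by (auto simp: B_def)
  define x where "x j = (if j < Suc P then v $ j else 0)" for j
  have "is_vec N x"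
    using assms by (auto simp: is_vec_def x_def)
  moreover have "x \<noteq> (\<lambda>_. 0)"
  proof
    assume x0: "x = (\<lambda>_. 0)"
    have "v $ i = 0" if "i < Suc P" for i
      using fun_cong[OF x0, of i] that by (simp add: x_def)
    with v(1,2) show False
      by (metis carrier_vecD eq_vecI index_zero_vec)
  qed
  moreover have "mat_vec P N phi x i = 0" for i
  proof (cases "i < P")
    case True
    have "(\<Sum>j<N. phi i j * x j) = (\<Sum>j<Suc P. phi i j * x j)"
      using assms by (intro sum.mono_neutral_right) (auto simp: x_def)
    also have "\<dots> = (B *\<^sub>v v) $ i"
      using True v(1) by (simp add: B_def x_def scalar_prod_def atLeast0LessThan)
    finally show ?thesis
      using True v(3) by (simp add: mat_vec_def)
  qed (simp add: mat_vec_def)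
  moreover have "l0norm N x \<le> P + 1"
  proof -
    have "supp N x \<subseteq> {..<Suc P}"
      by (auto simp: supp_def x_def split: if_splits)
    then show ?thesis
      unfolding l0norm_def using card_mono[of "{..<Suc P}"] by fastforce
  qed
  ultimately show ?thesis
    by blast
qed

lemma spark_le_l0norm:
  assumes "is_vec N x" "x \<noteq> (\<lambda>_. 0)" "mat_vec P N phi x = (\<lambda>_. 0)"
  shows "spark P N phi \<le> l0norm N x"
  unfolding spark_def using assms by (intro cInf_lower bdd_below_bot) blast

lemma full_spark_if_minors_nonsingular:
  fixes phi :: "nat \<Rightarrow> nat \<Rightarrow> real"
  assumes "P < N"
    and minors: "\<And>cs. length cs = P \<Longrightarrow> distinct cs \<Longrightarrow> set cs \<subseteq> {..<N} \<Longrightarrow>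
      det (mat P P (\<lambda>(i, j). phi i (cs ! j))) \<noteq> 0"
  shows "full_spark P N phi"
proof -
  have kernel_l0norm: "P + 1 \<le> l0norm N y"
    if "is_vec N y" "y \<noteq> (\<lambda>_. 0)" "mat_vec P N phi y = (\<lambda>_. 0)" for y
    using l0norm_kernel_gt_if_minors_nonsingular[OF minors _ that] \<open>P < N\<close> by simp
  obtain x where x: "is_vec N x" "x \<noteq> (\<lambda>_. 0)" "mat_vec P N phi x = (\<lambda>_. 0)" "l0norm N x \<le> P + 1"
    using exists_kernel_vector_l0norm_le[OF \<open>P < N\<close>] by blast
  with kernel_l0norm have "l0norm N x = P + 1"
    by fastforce
  with x kernel_l0norm show ?thesis
    unfolding full_spark_def spark_def by (intro cInf_eq_minimum) (auto, metis)
qed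

lemma l0_unique_solution_if_sparse:
  assumes x: "is_vec N x" and sparse: "2 * l0norm N x < spark P N phi"
  shows "l0_unique_solution P N phi (mat_vec P N phi x) x"
  unfolding l0_unique_solution_def
proof (intro conjI allI impI)
  fix z assume z: "is_vec N z \<and> mat_vec P N phi z = mat_vec P N phi x \<and> z \<noteq> x"
  define w where "w j = z j - x j" for j
  have "mat_vec P N phi w i = mat_vec P N phi z i - mat_vec P N phi x i" for i
    by (simp add: mat_vec_def w_def right_diff_distrib sum_subtractf)
  with x z have "spark P N phi \<le> l0norm N w"
    by (intro spark_le_l0norm) (auto simp: is_vec_def w_def fun_eq_iff)
  also have "\<dots> \<le> card (supp N z \<union> supp N x)"
    unfolding l0norm_def by (intro card_mono) (auto simp: supp_def w_def)
  also have "\<dots> \<le> l0norm N z + l0norm N x"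
    unfolding l0norm_def by (rule card_Un_le)
  finally show "l0norm N x < l0norm N z"
    using sparse by linarith
qed (use x in simp_all)

lemma is_vec_nds_traj_Suc: "is_vec N (nds_traj N A f h x0 (Suc t))"
  by (simp add: is_vec_def nds_traj_def nds_step_def)

lemma nds_traj_pinching_1_off_source:
  assumes "assumption1 N f" "assumption2 N h \<delta>" "q < N" "i < N" "i \<noteq> q"
  shows "nds_traj N A f h (pinching_init q \<epsilon>) 1 i = A i q * h i q 0 \<epsilon>"
proof -
  have "(\<Sum>j<N. A i j * h i j 0 (pinching_init q \<epsilon> j)) = (\<Sum>j<N. if j = q then A i q * h i q 0 \<epsilon> else 0)"
    using assms(2,4) by (intro sum.cong) (auto simp: pinching_init_def assumption2_def)
  with assms show ?thesis
    by (simp add: nds_traj_def nds_step_def pinching_init_def assumption1_def)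
qed

lemma supp_nds_traj_pinching_1:
  assumes "adjacency N A" "assumption1 N f" "assumption2 N h \<delta>" "q < N" "0 < \<bar>\<epsilon>\<bar>" "\<bar>\<epsilon>\<bar> < \<delta>"
  shows "supp N (nds_traj N A f h (pinching_init q \<epsilon>) 1) - {q} = first_level N A q"
proof -
  have "nds_traj N A f h (pinching_init q \<epsilon>) 1 i \<noteq> 0 \<longleftrightarrow> A i q = 1" if "i < N" "i \<noteq> q" for i
  proof -
    have "A i q \<in> {0, 1}" "h i q 0 \<epsilon> \<noteq> 0"
      using assms that by (auto simp: adjacency_def assumption2_def)
    then show ?thesis
      using nds_traj_pinching_1_off_source[OF assms(2,3,4) that] by auto
  qed
  moreover have "A q q = 0"
    using assms(1,4) by (simp add: adjacency_def)
  ultimately show ?thesis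
    by (auto simp: supp_def first_level_def) (metis zero_neq_one)
qed

lemma l0norm_nds_traj_pinching_1_le:
  assumes "adjacency N A" "assumption1 N f" "assumption2 N h \<delta>" "q < N" "0 < \<bar>\<epsilon>\<bar>" "\<bar>\<epsilon>\<bar> < \<delta>"
  shows "l0norm N (nds_traj N A f h (pinching_init q \<epsilon>) 1) \<le> max_out_degree N A + 1"
proof -
  have "l0norm N (nds_traj N A f h (pinching_init q \<epsilon>) 1) \<le> card (insert q (first_level N A q))"
    unfolding l0norm_def using supp_nds_traj_pinching_1[OF assms]
    by (intro card_mono) (auto simp: first_level_def)
  also have "\<dots> \<le> out_degree N A q + 1"
    by (simp add: card_insert_le_m1 first_level_def out_degree_def card_insert_if)
  also have "out_degree N A q \<le> max_out_degree N A"
    unfolding max_out_degree_def using assms(4) by (intro Max_ge) auto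
  finally show ?thesis
    by simp
qed

lemma pinching_l0_recovery:
  assumes "full_spark P N phi"
    and "adjacency N A" "assumption1 N f" "assumption2 N h \<delta>"
    and "real P > 2 * real (max_out_degree N A) + 1"
    and "q < N" "0 < \<bar>\<epsilon>\<bar>" "\<bar>\<epsilon>\<bar> < \<delta>"
  shows "let x1 = nds_traj N A f h (pinching_init q \<epsilon>) 1 in
    l0_unique_solution P N phi (mat_vec P N phi x1) x1 \<and> supp N x1 - {q} = first_level N A q"
proof -
  define x1 where "x1 = nds_traj N A f h (pinching_init q \<epsilon>) 1"
  have "l0norm N x1 \<le> max_out_degree N A + 1"
    unfolding x1_def using l0norm_nds_traj_pinching_1_le[OF assms(2-4,6-8)] .
  with assms(1,5) have "2 * l0norm N x1 < spark P N phi"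
    unfolding full_spark_def by linarith
  then have "l0_unique_solution P N phi (mat_vec P N phi x1) x1"
    using is_vec_nds_traj_Suc l0_unique_solution_if_sparse by (simp add: x1_def)
  moreover have "supp N x1 - {q} = first_level N A q"
    unfolding x1_def using supp_nds_traj_pinching_1[OF assms(2-4,6-8)] .
  ultimately show ?thesis
    unfolding Let_def x1_def[symmetric] ..
qed

lemma AE_pinching_l0_recovery:
  assumes "AE \<omega> in M. \<forall>q<N. full_spark P N (phi \<omega> q)"
    and "adjacency N A" "assumption1 N f" "assumption2 N h \<delta>"
    and "real P > 2 * real (max_out_degree N A) + 1"
  shows "AE \<omega> in M. \<forall>q<N. \<forall>\<epsilon>::real. 0 < \<bar>\<epsilon>\<bar> \<and> \<bar>\<epsilon>\<bar> < \<delta> \<longrightarrow>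
    (let x1 = nds_traj N A f h (pinching_init q \<epsilon>) 1 in
       l0_unique_solution P N (phi \<omega> q) (mat_vec P N (phi \<omega> q) x1) x1
       \<and> supp N x1 - {q} = first_level N A q)"
  using assms(1) by eventually_elim (use assms(2-5) in \<open>blast intro: pinching_l0_recovery\<close>)

lemma AE_gauss_matrices_full_spark:
  assumes "P < N"
  shows "AE \<omega> in gauss_matrices P N. \<forall>q<N. full_spark P N (phi_of \<omega> q)"
proof -
  have "AE \<omega> in gauss_matrices P N. det (mat P P (\<lambda>(i, j). phi_of \<omega> q i (cs ! j))) \<noteq> 0"
    if "q < N" "length cs = P" "distinct cs" "set cs \<subseteq> {..<N}" for q cs
  proof (cases "P = 0")
    case True
    \<comment> \<open>Then the entries have the meaningless variance \<open>1 / 0 = 0\<close>, but all minors are empty.\<close>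
    then show ?thesis
      by (simp add: det_mat_0)
  next
    case False
    let ?M = "density lborel (normal_density 0 (sqrt (1 / real P)))"
    from False have M: "prob_space ?M" "\<And>c. AE y in ?M. y \<noteq> c" "sets ?M = sets borel"
      by (auto simp: prob_space_normal_density AE_density intro: AE_mp[OF AE_lborel_singleton])
    have "AE \<omega> in PiM ({..<N} \<times> {..<P} \<times> {..<N}) (\<lambda>_. ?M).
        det (mat P P (\<lambda>(i, j). \<omega> (q, i, cs ! j))) \<noteq> 0"
      by (rule AE_PiM_det_nonzero[OF M]) (use that nth_mem in \<open>auto simp: inj_on_def nth_eq_iff_index_eq\<close>)
    then show ?thesis
      unfolding gauss_matrices_def phi_of_def by simp
  qed
  then have "AE \<omega> in gauss_matrices P N. \<forall>q cs. q < N \<and> length cs = P \<and> distinct cs \<and>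
      set cs \<subseteq> {..<N} \<longrightarrow> det (mat P P (\<lambda>(i, j). phi_of \<omega> q i (cs ! j))) \<noteq> 0"
    by (simp add: AE_all_countable AE_impI)
  then show ?thesis
    by eventually_elim (blast intro: full_spark_if_minors_nonsingular assms)
qed

theorem mainTheorem2:
  fixes P N :: nat
  assumes "P < N"
  shows "(AE \<omega> in gauss_matrices P N. \<forall>q<N. full_spark P N (phi_of \<omega> q))
    \<and> (\<forall>(A :: nat \<Rightarrow> nat \<Rightarrow> real) (f :: nat \<Rightarrow> real \<Rightarrow> real)
          (h :: nat \<Rightarrow> nat \<Rightarrow> real \<Rightarrow> real \<Rightarrow> real) (\<delta> :: real).
         adjacency N A \<and> assumption1 N f \<and> assumption2 N h \<delta>
         \<and> real P > 2 * real (max_out_degree N A) + 1 \<longrightarrow>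
         (AE \<omega> in gauss_matrices P N.
            \<forall>q<N. \<forall>\<epsilon>::real. 0 < \<bar>\<epsilon>\<bar> \<and> \<bar>\<epsilon>\<bar> < \<delta> \<longrightarrow>
              (let x1 = nds_traj N A f h (pinching_init q \<epsilon>) 1 in
                 l0_unique_solution P N (phi_of \<omega> q) (mat_vec P N (phi_of \<omega> q) x1) x1
                 \<and> supp N x1 - {q} = first_level N A q)))"
  using AE_gauss_matrices_full_spark[OF assms] AE_pinching_l0_recovery by blast

end
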